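(* The class of data languages accepted by SAFA is not closed under inverse homomorphism: there exist a data language $L\subseteq(\Sigma\times D)^*$ accepted by some SAFA and a homomorphism $h:(\Sigma\times D)^*\to(\Sigma\times D)^*$ such that no SAFA accepts $h^{-1}(L)=\{w: h(w)\in L\}$.
   Context: $D$ is a fixed countably infinite set of data values; for a finite alphabet $\Sigma$, data words are elements of $(\Sigma\times D)^*$. A homomorphism of data words is a monoid homomorphism $h:(\Sigma\times D)^*\to(\Sigma\times D)^*$ ($h(\varepsilon)=\varepsilon$, $h(uv)=h(u)h(v)$), determined by the images of single letters (which may be the empty word). A set augmented finite automaton (SAFA) is a tuple $M=(Q,\Sigma\times D,q_0,F,H,\delta)$: $Q$ finite set of states, $q_0\in Q$ initial, $F\subseteq Q$ final, $H=\{h_1,\dots,h_m\}$ a finite collection of (names of) sets of data values, $\delta\subseteq Q\times\Sigma\times C\times OP\times Q$ with $C=\{p(h_i),\,!p(h_i)\}$, $OP=\{-\}\cup\{\mathsf{ins}(h_i)\}$. Configurations are $(q,\langle S_1,\dots,S_m\rangle)$ with $S_i\subseteq D$ finite; initially state $q_0$ and all sets are empty. On reading $(a,d)$, a transition $(q,a,\alpha,op,q')$ from the current state may be taken if $\alpha=p(h_i)$ and $d\in S_i$, or $\alpha=\,!p(h_i)$ and $d\notin S_i$; then the state becomes $q'$ and if $op=\mathsf{ins}(h_j)$ the value $d$ is added to $S_j$ ($op=-$ changes nothing). A word is accepted if some run reads it entirely and ends in $F$. *)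

theory Defs
  imports Main
begin

text \<open>Data values: D is modelled by the countably infinite type nat.
  States are natural numbers from a finite set; the sets h_1..h_m are
  indexed by 0..m-1.\<close>

type_synonym dletter = "nat \<times> nat"   (* (symbol, data value) *)

datatype cnd = Mem nat | NotMem nat
datatype opr = NoOp | Ins nat

fun cnd_idx :: "cnd \<Rightarrow> nat" where
  "cnd_idx (Mem i) = i" | "cnd_idx (NotMem i) = i"

fun opr_ok :: "nat \<Rightarrow> opr \<Rightarrow> bool" where
  "opr_ok m NoOp = True" | "opr_ok m (Ins j) = (j < m)"

record safa =
  states :: "nat set"
  alph :: "nat set"
  init :: nat
  final :: "nat set"
  nsets :: nat
  trans :: "(nat \<times> nat \<times> cnd \<times> opr \<times> nat) set"

definition wf_safa :: "safa \<Rightarrow> bool" where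
  "wf_safa M \<longleftrightarrow> finite (states M) \<and> finite (alph M) \<and> init M \<in> states M
     \<and> final M \<subseteq> states M
     \<and> (\<forall>(q,a,c,op,q') \<in> trans M. q \<in> states M \<and> a \<in> alph M \<and> cnd_idx c < nsets M
           \<and> opr_ok (nsets M) op \<and> q' \<in> states M)"

fun sat :: "cnd \<Rightarrow> (nat \<Rightarrow> nat set) \<Rightarrow> nat \<Rightarrow> bool" where
  "sat (Mem i) S d = (d \<in> S i)"
| "sat (NotMem i) S d = (d \<notin> S i)"

fun upd :: "opr \<Rightarrow> (nat \<Rightarrow> nat set) \<Rightarrow> nat \<Rightarrow> (nat \<Rightarrow> nat set)" where
  "upd NoOp S d = S"
| "upd (Ins j) S d = S(j := insert d (S j))"

definition step :: "safa \<Rightarrow> nat \<times> (nat \<Rightarrow> nat set) \<Rightarrow> dletter \<Rightarrow> nat \<times> (nat \<Rightarrow> nat set) \<Rightarrow> bool" where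
  "step M cf x cf' \<longleftrightarrow> (\<exists>c op. (fst cf, fst x, c, op, fst cf') \<in> trans M
        \<and> sat c (snd cf) (snd x) \<and> snd cf' = upd op (snd cf) (snd x))"

inductive reach :: "safa \<Rightarrow> nat \<times> (nat \<Rightarrow> nat set) \<Rightarrow> dletter list \<Rightarrow> nat \<times> (nat \<Rightarrow> nat set) \<Rightarrow> bool"
  for M where
  reach_nil: "reach M cf [] cf"
| reach_cons: "step M cf x cf' \<Longrightarrow> reach M cf' w cf'' \<Longrightarrow> reach M cf (x # w) cf''"

definition lang :: "safa \<Rightarrow> dletter list set" where
  "lang M = {w. \<exists>q S. reach M (init M, \<lambda>_. {}) w (q, S) \<and> q \<in> final M}"

definition hom_ext :: "(dletter \<Rightarrow> dletter list) \<Rightarrow> dletter list \<Rightarrow> dletter list" where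
  "hom_ext h w = concat (map h w)"

end

theory Submission
  imports Defs
begin

text \<open>A SAFA only ever compares the current data value with the values stored in its sets,
  so its language is invariant under injective renamings of data values. A homomorphism, on
  the other hand, may treat the data value 0 specially: if it erases every letter with nonzero
  data value, the preimage of the one-letter words contains the word (0,0) but not its renaming
  (0,1), so no SAFA accepts it.\<close>

abbreviation rename_cfg :: "(nat \<Rightarrow> nat) \<Rightarrow> nat \<times> (nat \<Rightarrow> nat set) \<Rightarrow> nat \<times> (nat \<Rightarrow> nat set)" where
  "rename_cfg f cf \<equiv> (fst cf, \<lambda>i. f ` snd cf i)"

lemma sat_rename:
  assumes "inj f"
  shows "sat c (\<lambda>i. f ` S i) (f d) = sat c S d"
  using assms by (cases c) (auto simp: inj_image_mem_iff)

lemma upd_rename: "upd op (\<lambda>i. f ` S i) (f d) = (\<lambda>i. f ` upd op S d i)"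
  by (cases op) (auto simp: fun_eq_iff)

lemma step_rename:
  assumes "inj f" and "step M cf x cf'"
  shows "step M (rename_cfg f cf) (apsnd f x) (rename_cfg f cf')"
proof -
  from assms(2) obtain c op where "(fst cf, fst x, c, op, fst cf') \<in> trans M"
    and "sat c (snd cf) (snd x)" and "snd cf' = upd op (snd cf) (snd x)"
    by (auto simp: step_def)
  with assms(1) show ?thesis
    by (auto simp: step_def sat_rename upd_rename)
qed

lemma reach_rename:
  assumes "inj f" and "reach M cf w cf'"
  shows "reach M (rename_cfg f cf) (map (apsnd f) w) (rename_cfg f cf')"
  using assms(2) by induction (auto intro: reach.intros step_rename[OF assms(1)])

lemma lang_rename:
  assumes "inj f" and "w \<in> lang M"
  shows "map (apsnd f) w \<in> lang M"
proof -
  from assms(2) obtain q S where run: "reach M (init M, \<lambda>_. {}) w (q, S)" and "q \<in> final M"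
    by (auto simp: lang_def)
  moreover from reach_rename[OF assms(1) run]
  have "reach M (init M, \<lambda>_. {}) (map (apsnd f) w) (q, \<lambda>i. f ` S i)"
    by simp
  ultimately show ?thesis
    by (auto simp: lang_def)
qed

lemma Nil_in_lang_iff: "[] \<in> lang M \<longleftrightarrow> init M \<in> final M"
  by (auto simp: lang_def elim: reach.cases intro: reach.intros)

definition one_letter_safa :: safa where
  "one_letter_safa = \<lparr>states = {0, 1}, alph = {0}, init = 0, final = {1}, nsets = 1,
     trans = {(0, 0, NotMem 0, NoOp, 1)}\<rparr>"

definition erase_nonzero_data :: "dletter \<Rightarrow> dletter list" where
  "erase_nonzero_data x = (if snd x = 0 then [(0, 0)] else [])"

lemma wf_one_letter_safa: "wf_safa one_letter_safa"
  by (auto simp: wf_safa_def one_letter_safa_def)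

lemma one_letter_in_lang: "[(0, d)] \<in> lang one_letter_safa"
proof -
  have "step one_letter_safa (0, \<lambda>_. {}) (0, d) (1, \<lambda>_. {})"
    by (auto simp: step_def one_letter_safa_def)
  then show ?thesis
    by (auto simp: lang_def one_letter_safa_def intro: reach.intros)
qed

lemma Nil_notin_lang_one_letter_safa: "[] \<notin> lang one_letter_safa"
  by (simp add: Nil_in_lang_iff one_letter_safa_def)

theorem theorem10:
  shows "\<exists>(Sigma :: nat set) (L :: dletter list set) (h :: dletter \<Rightarrow> dletter list) M.
     finite Sigma \<and> wf_safa M \<and> alph M = Sigma \<and> lang M = L
     \<and> (\<forall>x \<in> Sigma \<times> UNIV. set (h x) \<subseteq> Sigma \<times> UNIV)
     \<and> \<not> (\<exists>M'. wf_safa M' \<and> alph M' = Sigma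
            \<and> lang M' = {w \<in> lists (Sigma \<times> UNIV). hom_ext h w \<in> L})"
proof (intro exI conjI notI)
  let ?L = "lang one_letter_safa" and ?h = erase_nonzero_data
  show "wf_safa one_letter_safa"
    by (rule wf_one_letter_safa)
  show "finite {0::nat}" "alph one_letter_safa = {0}" "?L = ?L"
    by (simp_all add: one_letter_safa_def)
  show "\<forall>x \<in> {0} \<times> UNIV. set (?h x) \<subseteq> {0} \<times> UNIV"
    by (auto simp: erase_nonzero_data_def)
  assume "\<exists>M'. wf_safa M' \<and> alph M' = {0}
            \<and> lang M' = {w \<in> lists ({0} \<times> UNIV). hom_ext ?h w \<in> ?L}"
  then obtain M' where M': "lang M' = {w \<in> lists ({0} \<times> UNIV). hom_ext ?h w \<in> ?L}"
    by blast
  have "[(0, 0)] \<in> lang M'"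
    using one_letter_in_lang by (simp add: M' hom_ext_def erase_nonzero_data_def)
  then have "map (apsnd Suc) [(0, 0)] \<in> lang M'"
    by (rule lang_rename[rotated]) simp
  then show False
    using Nil_notin_lang_one_letter_safa by (simp add: M' hom_ext_def erase_nonzero_data_def)
qed

end
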